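(* Let $W_2\in\{M_2,S_2\}$ and let $\phi:W_2\to W_2$ be a linear map with $\sigma_{\mathcal{K}}(\phi(A))=\sigma_{\mathcal{K}}(A)$ for all $A\in W_2$. Then $\operatorname{tr}(\phi(A))=\operatorname{tr}(A)$ for all $A\in W_2$, and either $\operatorname{antitr}(\phi(A))=\operatorname{antitr}(A)$ for all $A\in W_2$, or $\operatorname{antitr}(\phi(A))=-\operatorname{antitr}(A)$ for all $A\in W_2$.
   Context: $M_2$: real $2\times2$ matrices; $S_2$: symmetric ones. For $A=\begin{bmatrix}a&b\\c&d\end{bmatrix}$, $\operatorname{tr}(A)=a+d$ and the anti-trace is $\operatorname{antitr}(A)=b+c$. Lorentz cone $\mathcal{K}=\{(x_1,x_2)^T:|x_1|\le x_2\}$; a real $\lambda$ is an L-eigenvalue of $A$ if there is a nonzero $x\in\mathcal{K}$ with $(A-\lambda I)x\in\mathcal{K}$ and $x^T(A-\lambda I)x=0$; $\sigma_{\mathcal{K}}(A)$ is the set of L-eigenvalues. *)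

theory Defs
  imports "HOL-Analysis.Analysis"
begin

type_synonym mat2 = "real^2^2"

definition tr2 :: "mat2 \<Rightarrow> real" where
  "tr2 A = A$1$1 + A$2$2"

definition antitr2 :: "mat2 \<Rightarrow> real" where
  "antitr2 A = A$1$2 + A$2$1"

definition lorentz2 :: "(real^2) set" where
  "lorentz2 = {x. \<bar>x$1\<bar> \<le> x$2}"

definition L_eigenvalue :: "mat2 \<Rightarrow> real \<Rightarrow> bool" where
  "L_eigenvalue A l \<longleftrightarrow>
     (\<exists>x. x \<noteq> 0 \<and> x \<in> lorentz2 \<and> (A - l *\<^sub>R mat 1) *v x \<in> lorentz2
          \<and> x \<bullet> ((A - l *\<^sub>R mat 1) *v x) = 0)"

definition L_spectrum :: "mat2 \<Rightarrow> real set" where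
  "L_spectrum A = {l. L_eigenvalue A l}"

definition sym_mats2 :: "mat2 set" where
  "sym_mats2 = {A. transpose A = A}"

end

theory Submission
  imports Defs
begin

text \<open>In the coordinates \<open>s = (x1 + x2)/2\<close>, \<open>t = (x2 - x1)/2\<close> the Lorentz cone becomes the
nonnegative quadrant and \<open>A\<close> becomes a similar matrix \<open>M(A)\<close> with entries \<open>lc_ij A\<close>.
Hence the L-eigenvalues of \<open>A\<close> are the Pareto eigenvalues of \<open>M(A)\<close>: \<open>lc_11 A\<close> if
\<open>lc_21 A \<ge> 0\<close>, \<open>lc_22 A\<close> if \<open>lc_12 A \<ge> 0\<close>, and the eigenvalues with a positive eigenvector.
Applied to \<open>\<phi> A\<close> and \<open>-\<phi> A\<close>, this shows that the linear functionals \<open>lc_11 \<circ> \<phi>\<close> and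
\<open>lc_22 \<circ> \<phi>\<close> take at each \<open>A\<close> a value that is a diagonal entry or an eigenvalue of \<open>M(A)\<close>;
evaluating at a few test matrices, such a functional is \<open>lc_11\<close> or \<open>lc_22\<close>. The two cannot
coincide: the matrices with \<open>M = diag(1, 0)\<close> and \<open>M = diag(0, 1)\<close> have L-spectrum \<open>{0, 1}\<close>,
whereas a matrix whose \<open>M\<close> has both diagonal entries equal to \<open>c\<close> never has both \<open>c\<close> and a
smaller L-eigenvalue. Finally \<open>tr2 = lc_11 + lc_22\<close> and \<open>antitr2 = lc_11 - lc_22\<close>.\<close>

text \<open>The entries of \<open>P\<^sup>-\<^sup>1 A P\<close> for \<open>P = [[1, -1], [1, 1]]\<close>, whose columns span the two boundary
rays of the Lorentz cone; \<open>lc_mat p q r s\<close> is the matrix with these entries \<open>p, q, r, s\<close>.\<close>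

definition lc_11 :: "mat2 \<Rightarrow> real" where "lc_11 A = (A$1$1 + A$1$2 + A$2$1 + A$2$2) / 2"
definition lc_12 :: "mat2 \<Rightarrow> real" where "lc_12 A = (- A$1$1 + A$1$2 - A$2$1 + A$2$2) / 2"
definition lc_21 :: "mat2 \<Rightarrow> real" where "lc_21 A = (- A$1$1 - A$1$2 + A$2$1 + A$2$2) / 2"
definition lc_22 :: "mat2 \<Rightarrow> real" where "lc_22 A = (A$1$1 - A$1$2 - A$2$1 + A$2$2) / 2"

definition lc_mat :: "real \<Rightarrow> real \<Rightarrow> real \<Rightarrow> real \<Rightarrow> mat2" where
  "lc_mat p q r s =
     vector [vector [(p - q - r + s) / 2, (p + q - r - s) / 2],
             vector [(p - q + r - s) / 2, (p + q + r + s) / 2]]"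

lemma lc_lc_mat [simp]:
  "lc_11 (lc_mat p q r s) = p" "lc_12 (lc_mat p q r s) = q"
  "lc_21 (lc_mat p q r s) = r" "lc_22 (lc_mat p q r s) = s"
  by (simp_all add: lc_mat_def lc_11_def lc_12_def lc_21_def lc_22_def field_simps)

lemma lc_mat_lc: "lc_mat (lc_11 A) (lc_12 A) (lc_21 A) (lc_22 A) = A"
  by (simp add: vec_eq_iff forall_2 lc_mat_def lc_11_def lc_12_def lc_21_def lc_22_def field_simps)

lemma lc_mat_add:
  "lc_mat p q r s + lc_mat p' q' r' s' = lc_mat (p + p') (q + q') (r + r') (s + s')"
  by (simp add: vec_eq_iff forall_2 lc_mat_def field_simps)

lemma lc_mat_scaleR: "c *\<^sub>R lc_mat p q r s = lc_mat (c * p) (c * q) (c * r) (c * s)"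
  by (simp add: vec_eq_iff forall_2 lc_mat_def field_simps)

lemma lc_add [simp]:
  "lc_11 (A + B) = lc_11 A + lc_11 B" "lc_12 (A + B) = lc_12 A + lc_12 B"
  "lc_21 (A + B) = lc_21 A + lc_21 B" "lc_22 (A + B) = lc_22 A + lc_22 B"
  by (simp_all add: lc_11_def lc_12_def lc_21_def lc_22_def field_simps)

lemma lc_scaleR [simp]:
  "lc_11 (c *\<^sub>R A) = c * lc_11 A" "lc_12 (c *\<^sub>R A) = c * lc_12 A"
  "lc_21 (c *\<^sub>R A) = c * lc_21 A" "lc_22 (c *\<^sub>R A) = c * lc_22 A"
  by (simp_all add: lc_11_def lc_12_def lc_21_def lc_22_def field_simps)

lemma lc_uminus [simp]:
  "lc_11 (- A) = - lc_11 A" "lc_12 (- A) = - lc_12 A"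
  "lc_21 (- A) = - lc_21 A" "lc_22 (- A) = - lc_22 A"
  by (simp_all add: lc_11_def lc_12_def lc_21_def lc_22_def field_simps)

lemma sym_mats2_iff_lc: "A \<in> sym_mats2 \<longleftrightarrow> lc_12 A = lc_21 A"
  by (auto simp: sym_mats2_def vec_eq_iff forall_2 transpose_def lc_12_def lc_21_def)

lemma tr2_eq_lc: "tr2 A = lc_11 A + lc_22 A"
  by (simp add: tr2_def lc_11_def lc_22_def field_simps)

lemma antitr2_eq_lc: "antitr2 A = lc_11 A - lc_22 A"
  by (simp add: antitr2_def lc_11_def lc_22_def field_simps)

lemma ex_vector2_lc: "(\<exists>x :: real^2. P x) \<longleftrightarrow> (\<exists>s t. P (vector [s - t, s + t]))"
proof
  assume "\<exists>x. P x"
  then obtain x :: "real^2" where "P x" by blast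
  moreover have "x = vector [(x$1 + x$2)/2 - (x$2 - x$1)/2, (x$1 + x$2)/2 + (x$2 - x$1)/2]"
    by (simp add: vec_eq_iff forall_2 field_simps)
  ultimately show "\<exists>s t. P (vector [s - t, s + t])" by metis
qed blast

lemma lc_matrix_vector_mult:
  "(A - l *\<^sub>R mat 1) *v vector [s - t, s + t] =
     vector [(lc_11 A - l) * s + lc_12 A * t - (lc_21 A * s + (lc_22 A - l) * t),
             (lc_11 A - l) * s + lc_12 A * t + (lc_21 A * s + (lc_22 A - l) * t)]"
  by (simp add: vec_eq_iff forall_2 matrix_vector_mult_def sum_2 mat_def
      lc_11_def lc_12_def lc_21_def lc_22_def field_simps)

lemma vector_lc_in_lorentz2: "vector [p - q, p + q] \<in> lorentz2 \<longleftrightarrow> 0 \<le> p \<and> 0 \<le> q"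
  by (auto simp: lorentz2_def abs_le_iff)

lemma inner_vector_lc_eq_0:
  "vector [s - t, s + t] \<bullet> (vector [p - q, p + q] :: real^2) = 0 \<longleftrightarrow> s * p + t * q = 0"
  unfolding inner_vec_def sum_2 by (simp add: algebra_simps) linarith

lemma vector_lc_eq_0: "vector [s - t, s + t] = (0 :: real^2) \<longleftrightarrow> s = 0 \<and> t = 0"
  by (auto simp: vec_eq_iff forall_2)

lemma L_eigenvalue_iff_lc:
  "L_eigenvalue A l \<longleftrightarrow>
     (\<exists>s t. 0 \<le> s \<and> 0 \<le> t \<and> (s \<noteq> 0 \<or> t \<noteq> 0) \<and>
        0 \<le> (lc_11 A - l) * s + lc_12 A * t \<and> 0 \<le> lc_21 A * s + (lc_22 A - l) * t \<and>
        s * ((lc_11 A - l) * s + lc_12 A * t) + t * (lc_21 A * s + (lc_22 A - l) * t) = 0)"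
  unfolding L_eigenvalue_def ex_vector2_lc lc_matrix_vector_mult vector_lc_in_lorentz2
    inner_vector_lc_eq_0 vector_lc_eq_0
  by (simp add: conj_ac)

definition lc_pos_eigenvalue :: "mat2 \<Rightarrow> real \<Rightarrow> bool" where
  "lc_pos_eigenvalue A l \<longleftrightarrow>
     (\<exists>s t. 0 < s \<and> 0 < t \<and> (lc_11 A - l) * s + lc_12 A * t = 0 \<and> lc_21 A * s + (lc_22 A - l) * t = 0)"

lemma L_eigenvalue_cases:
  assumes "L_eigenvalue A l"
  shows "(l = lc_11 A \<and> 0 \<le> lc_21 A) \<or> (l = lc_22 A \<and> 0 \<le> lc_12 A) \<or> lc_pos_eigenvalue A l"
proof -
  obtain s t where st: "0 \<le> s" "0 \<le> t" "s \<noteq> 0 \<or> t \<noteq> 0"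
    and pq: "0 \<le> (lc_11 A - l) * s + lc_12 A * t" "0 \<le> lc_21 A * s + (lc_22 A - l) * t"
    and compl: "s * ((lc_11 A - l) * s + lc_12 A * t) + t * (lc_21 A * s + (lc_22 A - l) * t) = 0"
    using assms unfolding L_eigenvalue_iff_lc by blast
  have "s * ((lc_11 A - l) * s + lc_12 A * t) = 0" "t * (lc_21 A * s + (lc_22 A - l) * t) = 0"
    using compl st pq by (smt (verit) mult_nonneg_nonneg)+
  then consider "0 < s" "0 < t" "(lc_11 A - l) * s + lc_12 A * t = 0" "lc_21 A * s + (lc_22 A - l) * t = 0"
    | "0 < s" "t = 0" "(lc_11 A - l) * s = 0" | "s = 0" "0 < t" "(lc_22 A - l) * t = 0"
    using st by fastforce
  then show ?thesis
  proof cases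
    case 1
    then show ?thesis unfolding lc_pos_eigenvalue_def by blast
  next
    case 2
    then show ?thesis using pq(2) by (simp add: zero_le_mult_iff)
  next
    case 3
    then show ?thesis using pq(1) by (simp add: zero_le_mult_iff)
  qed
qed

lemma L_eigenvalue_lc_11: "0 \<le> lc_21 A \<Longrightarrow> L_eigenvalue A (lc_11 A)"
  unfolding L_eigenvalue_iff_lc by (rule exI[of _ 1], rule exI[of _ 0]) simp

lemma L_eigenvalue_lc_22: "0 \<le> lc_12 A \<Longrightarrow> L_eigenvalue A (lc_22 A)"
  unfolding L_eigenvalue_iff_lc by (rule exI[of _ 0], rule exI[of _ 1]) simp

lemma L_spectrum_lc_mat_diag: "0 \<le> q \<Longrightarrow> 0 \<le> r \<Longrightarrow> {p, s} \<subseteq> L_spectrum (lc_mat p q r s)"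
  using L_eigenvalue_lc_11[of "lc_mat p q r s"] L_eigenvalue_lc_22[of "lc_mat p q r s"]
  by (simp add: L_spectrum_def)

lemma L_spectrum_equal_diag:
  assumes "lc_11 B = c" "lc_22 B = c" "l < c"
  shows "\<not> {l, c} \<subseteq> L_spectrum B"
proof
  assume "{l, c} \<subseteq> L_spectrum B"
  then have "L_eigenvalue B l" "L_eigenvalue B c"
    unfolding L_spectrum_def by auto
  obtain s t where "0 < s" "0 < t" "(c - l) * s + lc_12 B * t = 0" "lc_21 B * s + (c - l) * t = 0"
    using L_eigenvalue_cases[OF \<open>L_eigenvalue B l\<close>] assms unfolding lc_pos_eigenvalue_def by auto
  moreover have "0 < (c - l) * s" "0 < (c - l) * t"
    using \<open>0 < s\<close> \<open>0 < t\<close> \<open>l < c\<close> by simp_all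
  ultimately have "lc_12 B * t < 0" "lc_21 B * s < 0"
    by linarith+
  then have "lc_12 B < 0" "lc_21 B < 0"
    using \<open>0 < s\<close> \<open>0 < t\<close> by (simp_all add: mult_less_0_iff)
  then show False
    using L_eigenvalue_cases[OF \<open>L_eigenvalue B c\<close>] assms unfolding lc_pos_eigenvalue_def by auto
qed

text \<open>The last disjunct is the characteristic equation of \<open>P\<^sup>-\<^sup>1 A P\<close>, hence of \<open>A\<close>. Dropping the
sign conditions of \<open>L_eigenvalue_cases\<close> makes the notion invariant under \<open>A \<mapsto> -A, l \<mapsto> -l\<close>.\<close>

definition lc_candidate :: "mat2 \<Rightarrow> real \<Rightarrow> bool" where
  "lc_candidate A l \<longleftrightarrow>
     l = lc_11 A \<or> l = lc_22 A \<or> (l - lc_11 A) * (l - lc_22 A) = lc_12 A * lc_21 A"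

lemma lc_pos_eigenvalue_char_poly:
  assumes "lc_pos_eigenvalue A l"
  shows "(l - lc_11 A) * (l - lc_22 A) = lc_12 A * lc_21 A"
proof -
  obtain s t where st: "0 < s" "0 < t"
    and "(l - lc_11 A) * s = lc_12 A * t" "(l - lc_22 A) * t = lc_21 A * s"
    using assms unfolding lc_pos_eigenvalue_def by (auto simp: algebra_simps)
  then have "((l - lc_11 A) * (l - lc_22 A)) * (s * t) = (lc_12 A * lc_21 A) * (s * t)"
    by (metis mult.assoc mult.left_commute)
  then show ?thesis using st by simp
qed

lemma L_eigenvalue_imp_lc_candidate: "L_eigenvalue A l \<Longrightarrow> lc_candidate A l"
  using L_eigenvalue_cases lc_pos_eigenvalue_char_poly unfolding lc_candidate_def by blast

lemma lc_candidate_uminus: "lc_candidate (- A) (- l) \<longleftrightarrow> lc_candidate A l"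
  unfolding lc_candidate_def by (auto simp: algebra_simps)

lemma lc_candidate_of_L_spectrum_eq:
  assumes "L_spectrum B = L_spectrum A" "L_spectrum (- B) = L_spectrum (- A)"
  shows "lc_candidate A (lc_11 B)" "lc_candidate A (lc_22 B)"
proof -
  have cand: "lc_candidate A l" if "L_eigenvalue B l \<or> L_eigenvalue (- B) (- l)" for l
    using that assms L_eigenvalue_imp_lc_candidate lc_candidate_uminus
    unfolding L_spectrum_def by blast
  show "lc_candidate A (lc_11 B)"
    using cand L_eigenvalue_lc_11[of B] L_eigenvalue_lc_11[of "- B"] by force
  show "lc_candidate A (lc_22 B)"
    using cand L_eigenvalue_lc_22[of B] L_eigenvalue_lc_22[of "- B"] by force
qed

lemma lc_candidate_linear_on_sym:
  fixes f :: "mat2 \<Rightarrow> real"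
  assumes add: "\<forall>A\<in>sym_mats2. \<forall>B\<in>sym_mats2. f (A + B) = f A + f B"
    and scale: "\<forall>A\<in>sym_mats2. \<forall>c. f (c *\<^sub>R A) = c * f A"
    and cand: "\<forall>A\<in>sym_mats2. lc_candidate A (f A)"
  obtains a where "a = 0 \<or> a = 1" "\<And>p q s. f (lc_mat p q q s) = a * p + (1 - a) * s"
proof -
  have sym: "lc_mat p q q s \<in> sym_mats2" for p q s
    by (simp add: sym_mats2_iff_lc)
  have f_add: "f (lc_mat (p + p') (q + q') (q + q') (s + s')) = f (lc_mat p q q s) + f (lc_mat p' q' q' s')"
    for p p' q q' s s'
    using add sym by (metis lc_mat_add)
  have f_scale: "f (lc_mat (c * p) (c * q) (c * q) (c * s)) = c * f (lc_mat p q q s)" for c p q s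
    using scale sym by (metis lc_mat_scaleR)
  have cand_lc: "lc_candidate (lc_mat p q q s) (f (lc_mat p q q s))" for p q s
    using cand sym by blast
  define a where "a = f (lc_mat 1 0 0 0)"
  define b where "b = f (lc_mat 0 1 1 0)"
  have f_lc: "f (lc_mat p q q s) = p * a + q * b + s * (1 - a)" for p q s
  proof -
    have "f (lc_mat 1 0 0 1) = 1"
      using cand_lc[of 1 0 1] unfolding lc_candidate_def by auto
    then have "f (lc_mat 0 0 0 1) = 1 - a"
      using f_add[of 1 0 0 0 0 1] unfolding a_def by simp
    then show ?thesis
      using f_add[of p 0 0 q 0 s] f_add[of 0 0 q 0 0 s] f_scale[of p 1 0 0] f_scale[of q 0 1 0]
        f_scale[of s 0 0 1]
      unfolding a_def b_def by simp
  qed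
  have a01: "a = 0 \<or> a = 1"
    using cand_lc[of 1 0 0] unfolding lc_candidate_def a_def by auto
  moreover have "b = 0"
  proof -
    have "b = 0 \<or> b = 1 \<or> b = -1"
      using cand_lc[of 0 1 0] unfolding lc_candidate_def b_def
      by (auto simp: square_eq_1_iff)
    \<comment> \<open>the test matrix has eigenvalues \<open>4\<close> and \<open>-1\<close>, so its candidates are \<open>0, 3, 4\<close>\<close>
    moreover have "lc_candidate (lc_mat 3 2 2 0) (3 * a + 2 * b)"
      using cand_lc[of 3 2 0] f_lc[of 3 2 0] by simp
    ultimately show ?thesis
      using a01 unfolding lc_candidate_def by auto
  qed
  ultimately show thesis
    using that f_lc by (simp add: algebra_simps)
qed

lemma lc_candidate_linear_functional:
  fixes f :: "mat2 \<Rightarrow> real"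
  assumes W: "W = UNIV \<or> W = sym_mats2"
    and add: "\<forall>A\<in>W. \<forall>B\<in>W. f (A + B) = f A + f B"
    and scale: "\<forall>A\<in>W. \<forall>c. f (c *\<^sub>R A) = c * f A"
    and cand: "\<forall>A\<in>W. lc_candidate A (f A)"
  shows "(\<forall>A\<in>W. f A = lc_11 A) \<or> (\<forall>A\<in>W. f A = lc_22 A)"
proof -
  obtain a where a: "a = 0 \<or> a = 1" and f_sym: "\<And>p q s. f (lc_mat p q q s) = a * p + (1 - a) * s"
    using lc_candidate_linear_on_sym[of f] W add scale cand by blast
  have "f A = a * lc_11 A + (1 - a) * lc_22 A" if "A \<in> W" for A
  proof (cases "W = UNIV")
    case True
    have "lc_candidate (lc_mat 0 1 (-1) 0) (f (lc_mat 0 1 (-1) 0))"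
      using cand True by blast
    then have "f (lc_mat 0 1 (-1) 0) = 0"
      unfolding lc_candidate_def by simp (smt (verit) zero_le_square)
    moreover define m where "m = (lc_12 A + lc_21 A) / 2"
    have "A = lc_mat (lc_11 A) m m (lc_22 A) + ((lc_12 A - lc_21 A) / 2) *\<^sub>R lc_mat 0 1 (-1) 0"
      by (subst lc_mat_lc[symmetric]) (simp add: lc_mat_scaleR lc_mat_add m_def field_simps)
    ultimately show ?thesis
      using add scale True f_sym by (metis add.right_neutral mult_zero_right UNIV_I)
  next
    case False
    then have "A = lc_mat (lc_11 A) (lc_12 A) (lc_12 A) (lc_22 A)"
      using W that lc_mat_lc[of A] by (simp add: sym_mats2_iff_lc)
    then show ?thesis
      using f_sym by metis
  qed
  then show ?thesis
    using a by auto
qed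

theorem corollary4p4:
  fixes W :: "mat2 set" and \<phi> :: "mat2 \<Rightarrow> mat2"
  assumes W: "W = UNIV \<or> W = sym_mats2"
    and maps: "\<forall>A\<in>W. \<phi> A \<in> W"
    and add: "\<forall>A\<in>W. \<forall>B\<in>W. \<phi> (A + B) = \<phi> A + \<phi> B"
    and scale: "\<forall>A\<in>W. \<forall>c::real. \<phi> (c *\<^sub>R A) = c *\<^sub>R \<phi> A"
    and pres: "\<forall>A\<in>W. L_spectrum (\<phi> A) = L_spectrum A"
  shows "(\<forall>A\<in>W. tr2 (\<phi> A) = tr2 A) \<and>
         ((\<forall>A\<in>W. antitr2 (\<phi> A) = antitr2 A) \<or> (\<forall>A\<in>W. antitr2 (\<phi> A) = - antitr2 A))"
proof -
  have uminus: "- A \<in> W \<and> \<phi> (- A) = - \<phi> A" if "A \<in> W" for A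
    using W that scale[rule_format, of A "-1"] by (auto simp: sym_mats2_iff_lc)
  have cand: "lc_candidate A (lc_11 (\<phi> A)) \<and> lc_candidate A (lc_22 (\<phi> A))" if "A \<in> W" for A
    using lc_candidate_of_L_spectrum_eq pres uminus that by metis
  have lc_11_\<phi>: "(\<forall>A\<in>W. lc_11 (\<phi> A) = lc_11 A) \<or> (\<forall>A\<in>W. lc_11 (\<phi> A) = lc_22 A)"
    using lc_candidate_linear_functional[OF W, of "\<lambda>A. lc_11 (\<phi> A)"] add scale cand by simp
  have lc_22_\<phi>: "(\<forall>A\<in>W. lc_22 (\<phi> A) = lc_11 A) \<or> (\<forall>A\<in>W. lc_22 (\<phi> A) = lc_22 A)"
    using lc_candidate_linear_functional[OF W, of "\<lambda>A. lc_22 (\<phi> A)"] add scale cand by simp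
  have E: "lc_mat 1 0 0 0 \<in> W" "lc_mat 0 0 0 1 \<in> W"
    using W by (auto simp: sym_mats2_iff_lc)
  have not_both_1: "\<not> (lc_11 (\<phi> E) = 1 \<and> lc_22 (\<phi> E) = 1)" if "E \<in> W" "{0, 1} \<subseteq> L_spectrum E" for E
    using that pres L_spectrum_equal_diag[of "\<phi> E" 1 0] by auto
  have "(\<forall>A\<in>W. lc_11 (\<phi> A) = lc_11 A \<and> lc_22 (\<phi> A) = lc_22 A) \<or>
        (\<forall>A\<in>W. lc_11 (\<phi> A) = lc_22 A \<and> lc_22 (\<phi> A) = lc_11 A)"
    using lc_11_\<phi> lc_22_\<phi> not_both_1[OF E(1)] not_both_1[OF E(2)]
      L_spectrum_lc_mat_diag[of 0 0 1 0] L_spectrum_lc_mat_diag[of 0 0 0 1] E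
    by (auto simp: insert_commute)
  then show ?thesis
    unfolding tr2_eq_lc antitr2_eq_lc by auto
qed

end
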